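(* Let $\ell>0$ and $\gamma\in\Sigma^\ell$ with length $\mathscr{L}(\gamma)=L$. Then its arclength parametrization $\Gamma:\mathbb{R}/L\mathbb{Z}\to\mathbb{R}^3$ (starting at $\Gamma(0)=\gamma(0)$, with the same orientation) is also $D_2$-symmetric, i.e. $\Gamma\in\Sigma^L$.
   Context: $R_0=\mathrm{Id}$, $R_1=\mathrm{diag}(1,-1,-1)$, $R_2=\mathrm{diag}(-1,1,-1)$, $R_3=\mathrm{diag}(-1,-1,1)$. For $\ell>0$, on $\mathbb{R}/\ell\mathbb{Z}$: $\psi_0^\ell(t)=t$, $\psi_1^\ell(t)=-t+\ell/2$, $\psi_2^\ell(t)=t-\ell/2$, $\psi_3^\ell(t)=-t+\ell$ (mod $\ell$); $\tau^\ell_{d_i}(\gamma)(t)=R_i\gamma(\psi_i^\ell(t))$. $\Sigma^\ell=\{\gamma\in C^0(\mathbb{R}/\ell\mathbb{Z},\mathbb{R}^3):0<\mathscr{L}(\gamma)<\infty,\ \tau^\ell_{d_i}(\gamma)=\gamma,\ i=0,1,2,3\}$, $\mathscr{L}$ denoting length. *)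

theory Defs
  imports "HOL-Analysis.Analysis"
begin

text \<open>Curves on R/lZ are represented as l-periodic functions on the real line.\<close>

definition periodic_on_R :: "real \<Rightarrow> (real \<Rightarrow> 'a) \<Rightarrow> bool" where
  "periodic_on_R l g \<longleftrightarrow> (\<forall>t. g (t + l) = g t)"

definition curve_variation :: "(real \<Rightarrow> real^3) \<Rightarrow> real \<Rightarrow> real \<Rightarrow> ereal" where
  "curve_variation g a b =
     (SUP xs \<in> {xs. xs \<noteq> [] \<and> sorted xs \<and> hd xs = a \<and> last xs = b}.
        ereal (\<Sum>i < length xs - 1. dist (g (xs ! i)) (g (xs ! Suc i))))"

definition curve_length :: "real \<Rightarrow> (real \<Rightarrow> real^3) \<Rightarrow> ereal" where
  "curve_length l g = curve_variation g 0 l"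

definition diag3 :: "real \<Rightarrow> real \<Rightarrow> real \<Rightarrow> real^3^3" where
  "diag3 a b c = (\<chi> i j. if i = j then (if i = 1 then a else if i = 2 then b else c) else 0)"

definition Rmat :: "nat \<Rightarrow> real^3^3" where
  "Rmat i = (if i = 0 then mat 1
             else if i = 1 then diag3 1 (-1) (-1)
             else if i = 2 then diag3 (-1) 1 (-1)
             else diag3 (-1) (-1) 1)"

definition psi :: "real \<Rightarrow> nat \<Rightarrow> real \<Rightarrow> real" where
  "psi l i t = (if i = 0 then t
               else if i = 1 then - t + l / 2
               else if i = 2 then t - l / 2
               else - t + l)"

definition tau :: "real \<Rightarrow> nat \<Rightarrow> (real \<Rightarrow> real^3) \<Rightarrow> (real \<Rightarrow> real^3)" where
  "tau l i g = (\<lambda>t. Rmat i *v g (psi l i t))"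

definition Sigma_sym :: "real \<Rightarrow> (real \<Rightarrow> real^3) set" where
  "Sigma_sym l = {g. continuous_on UNIV g \<and> periodic_on_R l g \<and>
                     0 < curve_length l g \<and> curve_length l g < \<infinity> \<and>
                     (\<forall>i \<in> {0,1,2,3}. tau l i g = g)}"

text \<open>Arclength parametrization of g (period l) with the same starting point and orientation:
  an L-periodic curve G with G(s(t)) = g(t) for t in [0,l], s(t) the length of g on [0,t].\<close>
definition is_arclength_param :: "real \<Rightarrow> (real \<Rightarrow> real^3) \<Rightarrow> (real \<Rightarrow> real^3) \<Rightarrow> bool" where
  "is_arclength_param l g G \<longleftrightarrow>
     periodic_on_R (real_of_ereal (curve_length l g)) G \<and>
     (\<forall>t \<in> {0..l}. G (real_of_ereal (curve_variation g 0 t)) = g t)"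

end

theory Submission
  imports Defs "HOL-Library.Periodic_Fun"
begin

text \<open>The arclength function S t, the length of g on [0, t], is continuous and nondecreasing
  and maps [0, l] onto [0, L]. As G (S t) = g t, the curve G is 1-Lipschitz on [0, L], hence
  (being L-periodic) continuous, and its length is L. Each symmetry of g is an isometry of R^3
  composed with a shift or a reflection of the parameter, so it preserves the lengths of subarcs:
  S (l - t) = L - S t and S (t + l/2) = S t + L/2. Thus S carries psi_3 and psi_2 for the period l
  to those for the period L, so tau_3 and tau_2 fix G on [0, L] and, by periodicity, everywhere;
  tau_1 is the composite of tau_2 and tau_3.\<close>

fun polygon_length :: "(real \<Rightarrow> 'a::metric_space) \<Rightarrow> real list \<Rightarrow> real" where
  "polygon_length g (x # y # xs) = dist (g x) (g y) + polygon_length g (y # xs)"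
| "polygon_length g _ = 0"

definition partitions :: "real \<Rightarrow> real \<Rightarrow> real list set" where
  "partitions a b = {xs. xs \<noteq> [] \<and> sorted xs \<and> hd xs = a \<and> last xs = b}"

lemma sum_dist_eq_polygon_length:
  "(\<Sum>i < length xs - 1. dist (g (xs ! i)) (g (xs ! Suc i))) = polygon_length g xs"
proof (induction g xs rule: polygon_length.induct)
  case (1 g x y xs)
  have "(\<Sum>i < length (x#y#xs) - 1. dist (g ((x#y#xs) ! i)) (g ((x#y#xs) ! Suc i)))
      = dist (g x) (g y) + (\<Sum>i < length (y#xs) - 1. dist (g ((y#xs) ! i)) (g ((y#xs) ! Suc i)))"
    by (simp add: sum.lessThan_Suc_shift del: sum.lessThan_Suc)
  with 1 show ?case by simp
qed auto

lemma curve_variation_eq_SUP: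
  "curve_variation g a b = (SUP xs\<in>partitions a b. ereal (polygon_length g xs))"
  unfolding curve_variation_def partitions_def sum_dist_eq_polygon_length ..

lemma polygon_length_append:
  "polygon_length g (xs @ y # ys) = polygon_length g (xs @ [y]) + polygon_length g (y # ys)"
proof (induction xs)
  case (Cons x xs)
  then show ?case by (cases xs) auto
qed simp

lemma polygon_length_map: "polygon_length g (map h xs) = polygon_length (g \<circ> h) xs"
  by (induction "g \<circ> h" xs rule: polygon_length.induct) auto

lemma polygon_length_cong:
  "(\<And>t. t \<in> set xs \<Longrightarrow> g t = h t) \<Longrightarrow> polygon_length g xs = polygon_length h xs"
  by (induction g xs rule: polygon_length.induct) auto

lemma polygon_length_rev: "polygon_length g (rev xs) = polygon_length g xs"
proof (induction g xs rule: polygon_length.induct)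
  case (1 g x y xs)
  have "polygon_length g (rev (x#y#xs)) = polygon_length g (rev xs @ y # [x])" by simp
  also have "\<dots> = polygon_length g (rev (y#xs)) + dist (g y) (g x)"
    by (subst polygon_length_append) simp
  finally show ?case using 1 by (simp add: dist_commute)
qed auto

lemma polygon_length_const: "(\<And>t. t \<in> set xs \<Longrightarrow> g t = c) \<Longrightarrow> polygon_length g xs = 0"
  by (induction g xs rule: polygon_length.induct) auto

lemma polygon_length_two_points:
  assumes "sorted xs" "set xs \<subseteq> {x, y}"
  shows "polygon_length g xs \<le> dist (g x) (g y)"
  using assms
proof (induction g xs rule: polygon_length.induct)
  case (1 g u v xs)
  show ?case
  proof (cases "u = v")
    case False
    with 1 have "u < v" and uv: "{u, v} = {x, y}" by auto
    have "t = v" if "t \<in> set (v # xs)" for t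
    proof -
      have "t \<in> {u, v}" "v \<le> t" using that 1 uv by auto
      with \<open>u < v\<close> show ?thesis by auto
    qed
    then have "polygon_length g (v # xs) = 0"
      by (intro polygon_length_const[of _ _ "g v"]) auto
    with uv show ?thesis by (auto simp: doubleton_eq_iff dist_commute)
  qed (use 1 in auto)
qed auto

lemma polygon_length_le_lipschitz:
  assumes "C-lipschitz_on (set xs) g" "sorted xs" "xs \<noteq> []"
  shows "polygon_length g xs \<le> C * (last xs - hd xs)"
  using assms
proof (induction g xs rule: polygon_length.induct)
  case (1 g x y xs)
  then have "polygon_length g (y # xs) \<le> C * (last (y # xs) - y)"
    by (auto intro: lipschitz_on_subset)
  moreover have "dist (g x) (g y) \<le> C * (y - x)"
    using lipschitz_onD[OF "1.prems"(1), of x y] "1.prems"(2) by (simp add: dist_real_def)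
  ultimately show ?case by (simp add: algebra_simps)
qed (auto simp: lipschitz_on_nonneg)

lemma sorted_hd_le_last:
  "sorted xs \<Longrightarrow> t \<in> set xs \<Longrightarrow> hd xs \<le> t \<and> t \<le> last xs"
proof (induction xs)
  case (Cons x xs)
  then show ?case by (cases xs) auto
qed simp

lemma partitions_bounds: "xs \<in> partitions a b \<Longrightarrow> t \<in> set xs \<Longrightarrow> a \<le> t \<and> t \<le> b"
  unfolding partitions_def using sorted_hd_le_last by blast

lemma partitions_append:
  assumes "ys \<in> partitions a b" "zs \<in> partitions b c"
  shows "ys @ tl zs \<in> partitions a c"
    and "polygon_length g (ys @ tl zs) = polygon_length g ys + polygon_length g zs"
proof -
  have ys: "ys \<noteq> []" "sorted ys" "hd ys = a" "last ys = b"
    and zs: "zs \<noteq> []" "sorted zs" "hd zs = b" "last zs = c"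
    using assms by (auto simp: partitions_def)
  have ys_eq: "ys = butlast ys @ [b]" using ys by (metis append_butlast_last_id)
  have zs_eq: "zs = b # tl zs" using zs by (cases zs) auto
  have "polygon_length g (ys @ tl zs) = polygon_length g (butlast ys @ b # tl zs)"
    by (subst ys_eq) simp
  also have "\<dots> = polygon_length g ys + polygon_length g zs"
    by (subst polygon_length_append) (metis ys_eq zs_eq)
  finally show "polygon_length g (ys @ tl zs) = polygon_length g ys + polygon_length g zs" .
  have "sorted (b # tl zs)" using zs zs_eq by metis
  moreover have "\<forall>u\<in>set ys. u \<le> b" using partitions_bounds[OF assms(1)] by blast
  ultimately have "sorted (ys @ tl zs)" using ys by (auto simp: sorted_append intro: order_trans)
  moreover have "last (ys @ tl zs) = c"
    using ys zs zs_eq by (metis append_Nil2 last_ConsL last_ConsR last_appendR)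
  ultimately show "ys @ tl zs \<in> partitions a c" using ys by (simp add: partitions_def)
qed

lemma partitions_split:
  assumes "sorted (x # xs)" "x \<le> b" "b \<le> last (x # xs)"
  obtains ys zs where "ys \<in> partitions x b" "zs \<in> partitions b (last (x # xs))"
    "polygon_length g (x # xs) \<le> polygon_length g ys + polygon_length g zs"
    "set ys \<subseteq> insert b (set (x # xs))" "set zs \<subseteq> insert b (set (x # xs))"
  using assms
proof (induction xs arbitrary: x thesis)
  case Nil
  then show ?case by (intro Nil.prems(1)[of "[b]" "[b]"]) (auto simp: partitions_def)
next
  case (Cons y xs)
  show ?case
  proof (cases "y \<le> b")
    case True
    obtain ys zs where yz: "ys \<in> partitions y b" "zs \<in> partitions b (last (y # xs))"
      "polygon_length g (y # xs) \<le> polygon_length g ys + polygon_length g zs"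
      "set ys \<subseteq> insert b (set (y # xs))" "set zs \<subseteq> insert b (set (y # xs))"
      using Cons.IH[of y] Cons.prems True by auto
    have "\<forall>t\<in>set ys. x \<le> t" using partitions_bounds[OF yz(1)] Cons.prems(2) by force
    then have "x # ys \<in> partitions x b" using yz(1) by (auto simp: partitions_def)
    moreover have "polygon_length g (x # ys) = dist (g x) (g y) + polygon_length g ys"
      using yz(1) by (cases ys) (auto simp: partitions_def)
    ultimately show ?thesis using yz Cons.prems by (intro Cons.prems(1)[of "x # ys" zs]) auto
  next
    case False
    have "[x, b] \<in> partitions x b" "b # y # xs \<in> partitions b (last (x # y # xs))"
      using Cons.prems False by (auto simp: partitions_def)
    moreover have "dist (g x) (g y) \<le> dist (g x) (g b) + dist (g b) (g y)"
      by (rule dist_triangle)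
    ultimately show ?thesis by (intro Cons.prems(1)) auto
  qed
qed

lemma polygon_length_le_curve_variation:
  "xs \<in> partitions a b \<Longrightarrow> ereal (polygon_length g xs) \<le> curve_variation g a b"
  unfolding curve_variation_eq_SUP by (rule SUP_upper)

lemma dist_le_curve_variation: "a \<le> b \<Longrightarrow> ereal (dist (g a) (g b)) \<le> curve_variation g a b"
  using polygon_length_le_curve_variation[of "[a, b]" a b g] by (simp add: partitions_def)

lemma curve_variation_nonneg: "a \<le> b \<Longrightarrow> 0 \<le> curve_variation g a b"
  using dist_le_curve_variation[of a b g] by (meson order_trans zero_le_dist ereal_less_eq(5))

lemma partitions_nonempty: "a \<le> b \<Longrightarrow> partitions a b \<noteq> {}"
  by (auto simp: partitions_def intro!: exI[of _ "[a, b]"])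

lemma curve_variation_refl: "curve_variation g a a = 0"
proof -
  have "polygon_length g xs = 0" if "xs \<in> partitions a a" for xs
    using partitions_bounds[OF that] by (intro polygon_length_const[of _ _ "g a"]) force
  then show ?thesis
    unfolding curve_variation_eq_SUP using partitions_nonempty[of a a] by (simp add: SUP_constant)
qed

lemma curve_variation_add:
  assumes "a \<le> b" "b \<le> c"
  shows "curve_variation g a c = curve_variation g a b + curve_variation g b c"
proof (rule antisym)
  show "curve_variation g a c \<le> curve_variation g a b + curve_variation g b c"
    unfolding curve_variation_eq_SUP[of g a c]
  proof (rule SUP_least)
    fix xs assume xs: "xs \<in> partitions a c"
    then obtain xs' where xs_eq: "xs = a # xs'" "last xs = c" "sorted xs"
      by (cases xs) (auto simp: partitions_def)
    with assms obtain ys zs where "ys \<in> partitions a b" "zs \<in> partitions b c"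
      and split: "polygon_length g xs \<le> polygon_length g ys + polygon_length g zs"
      by (metis partitions_split)
    then have "ereal (polygon_length g ys) + ereal (polygon_length g zs)
        \<le> curve_variation g a b + curve_variation g b c"
      by (intro add_mono polygon_length_le_curve_variation)
    with split show "ereal (polygon_length g xs) \<le> curve_variation g a b + curve_variation g b c"
      by (metis ereal_less_eq(3) order_trans plus_ereal.simps(1))
  qed
next
  have "ereal (polygon_length g ys) + curve_variation g b c \<le> curve_variation g a c"
    if ys: "ys \<in> partitions a b" for ys
  proof -
    have "ereal (polygon_length g ys) + curve_variation g b c
        = (SUP zs\<in>partitions b c. ereal (polygon_length g ys) + ereal (polygon_length g zs))"
      unfolding curve_variation_eq_SUP[of g b c]
      by (subst SUP_ereal_add_right[OF partitions_nonempty[OF assms(2)]]) simp_all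
    also have "\<dots> \<le> curve_variation g a c"
    proof (rule SUP_least)
      fix zs assume "zs \<in> partitions b c"
      with ys show "ereal (polygon_length g ys) + ereal (polygon_length g zs) \<le> curve_variation g a c"
        using polygon_length_le_curve_variation partitions_append by (metis plus_ereal.simps(1))
    qed
    finally show ?thesis .
  qed
  moreover have "curve_variation g b c \<noteq> -\<infinity>"
    using curve_variation_nonneg[OF assms(2), of g] by auto
  ultimately show "curve_variation g a b + curve_variation g b c \<le> curve_variation g a c"
    unfolding curve_variation_eq_SUP[of g a b]
    by (subst SUP_ereal_add_left[symmetric, OF partitions_nonempty[OF assms(1)]]) (auto intro: SUP_least)
qed

lemma curve_variation_shift:
  "curve_variation (\<lambda>t. g (t + c)) a b = curve_variation g (a + c) (b + c)"
proof -
  have map_shift: "map (\<lambda>t. t + d) xs \<in> partitions (a' + d) (b' + d)"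
    if "xs \<in> partitions a' b'" for xs a' b' d
    using that by (simp add: partitions_def sorted_map hd_map last_map)
  have "partitions (a + c) (b + c) = map (\<lambda>t. t + c) ` partitions a b"
  proof (intro equalityI subsetI)
    fix ys assume "ys \<in> partitions (a + c) (b + c)"
    then have "map (\<lambda>t. t + - c) ys \<in> partitions a b"
      using map_shift[of ys "a + c" "b + c" "- c"] by simp
    moreover have "ys = map (\<lambda>t. t + c) (map (\<lambda>t. t + - c) ys)" by (simp add: comp_def)
    ultimately show "ys \<in> map (\<lambda>t. t + c) ` partitions a b" by blast
  qed (auto intro: map_shift)
  then show ?thesis
    unfolding curve_variation_eq_SUP by (simp add: image_comp polygon_length_map comp_def)
qed

lemma curve_variation_reflect:
  "curve_variation (\<lambda>t. g (c - t)) a b = curve_variation g (c - b) (c - a)"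
proof -
  let ?r = "\<lambda>xs. rev (map (\<lambda>t. c - t) xs)"
  have map_reflect: "?r xs \<in> partitions (c - b') (c - a')" if "xs \<in> partitions a' b'" for xs a' b'
  proof -
    have "sorted (?r xs)" using that
      unfolding partitions_def sorted_wrt_rev sorted_wrt_map
      by (auto elim: sorted_wrt_mono_rel[rotated])
    with that show ?thesis by (simp add: partitions_def hd_rev last_rev hd_map last_map)
  qed
  have "partitions (c - b) (c - a) = ?r ` partitions a b"
  proof (intro equalityI subsetI)
    fix ys assume "ys \<in> partitions (c - b) (c - a)"
    then have "?r ys \<in> partitions a b" using map_reflect[of ys "c - b" "c - a"] by simp
    moreover have "ys = ?r (?r ys)" by (simp add: rev_map comp_def)
    ultimately show "ys \<in> ?r ` partitions a b" by blast
  qed (auto intro: map_reflect)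
  then show ?thesis
    unfolding curve_variation_eq_SUP
    by (simp add: image_comp polygon_length_rev polygon_length_map comp_def)
qed

lemma curve_variation_isometry:
  assumes "\<And>x y. dist (f x) (f y) = dist x y"
  shows "curve_variation (\<lambda>t. f (g t)) a b = curve_variation g a b"
proof -
  have "polygon_length (\<lambda>t. f (g t)) xs = polygon_length g xs" for xs
    by (induction g xs rule: polygon_length.induct) (simp_all add: assms)
  then show ?thesis unfolding curve_variation_eq_SUP by simp
qed

lemma curve_variation_le_lipschitz:
  assumes "C-lipschitz_on {a..b} g"
  shows "curve_variation g a b \<le> ereal (C * (b - a))"
  unfolding curve_variation_eq_SUP
proof (rule SUP_least)
  fix xs assume xs: "xs \<in> partitions a b"
  then have "C-lipschitz_on (set xs) g"
    using partitions_bounds[OF xs] by (force intro: lipschitz_on_subset[OF assms])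
  with xs show "ereal (polygon_length g xs) \<le> ereal (C * (b - a))"
    using polygon_length_le_lipschitz by (force simp: partitions_def)
qed

lemma polygon_length_le_chord_plus_curve_variation:
  assumes P: "P \<in> partitions x b" and "x < y" "y \<le> b"
    and gap: "\<And>u. u \<in> set P \<Longrightarrow> x < u \<Longrightarrow> y \<le> u"
  shows "ereal (polygon_length g P) \<le> ereal (dist (g x) (g y)) + curve_variation g y b"
proof -
  obtain P' where P': "P = x # P'" using P by (cases P) (auto simp: partitions_def)
  with P \<open>x < y\<close> \<open>y \<le> b\<close> have "sorted (x # P')" "x \<le> y" "y \<le> last (x # P')"
    by (auto simp: partitions_def)
  then obtain ys zs where
    ys: "ys \<in> partitions x y" "set ys \<subseteq> insert y (set P)" and zs: "zs \<in> partitions y b"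
    and split: "polygon_length g P \<le> polygon_length g ys + polygon_length g zs"
    by (rule partitions_split) (use P P' in \<open>auto simp: partitions_def\<close>)
  have "set ys \<subseteq> {x, y}"
  proof
    fix u assume u: "u \<in> set ys"
    then have "x \<le> u" "u \<le> y" using partitions_bounds[OF ys(1)] by auto
    with u ys(2) gap[of u] show "u \<in> {x, y}" by fastforce
  qed
  then have "polygon_length g ys \<le> dist (g x) (g y)"
    using ys(1) by (intro polygon_length_two_points) (auto simp: partitions_def)
  with split have
    "ereal (polygon_length g P) \<le> ereal (dist (g x) (g y)) + ereal (polygon_length g zs)"
    by simp
  also have "\<dots> \<le> ereal (dist (g x) (g y)) + curve_variation g y b"
    using polygon_length_le_curve_variation[OF zs] by (rule add_left_mono)
  finally show ?thesis .
qed

lemma curve_variation_right_small: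
  assumes cont: "isCont g x" and "x < b" and fin: "curve_variation g x b < \<infinity>" and "0 < e"
  obtains y where "x < y" "y \<le> b" "curve_variation g x y < ereal e"
proof -
  obtain v where v: "curve_variation g x b = ereal v"
    using fin curve_variation_nonneg[of x b g] \<open>x < b\<close> by (cases "curve_variation g x b") auto
  then have "ereal (v - e/2) < (SUP xs\<in>partitions x b. ereal (polygon_length g xs))"
    using \<open>0 < e\<close> by (simp flip: curve_variation_eq_SUP)
  then obtain P where P: "P \<in> partitions x b" "v - e/2 < polygon_length g P"
    by (auto simp: less_SUP_iff)
  obtain d where "d > 0" and d: "\<And>y. dist y x < d \<Longrightarrow> dist (g y) (g x) < e/2"
    using cont \<open>0 < e\<close> unfolding continuous_at_eps_delta by (meson half_gt_zero)
  define M where "M = {u \<in> set P. x < u}"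
  have "b \<in> M" "finite M" using P(1) \<open>x < b\<close> by (auto simp: M_def partitions_def)
  then have "Min M \<in> M" "Min M \<le> b" by (auto intro: Min_in)
  define y where "y = min (x + d/2) (Min M)"
  have "x < y" "y \<le> b" using \<open>Min M \<in> M\<close> \<open>Min M \<le> b\<close> \<open>d > 0\<close> by (auto simp: y_def M_def)
  have gap: "y \<le> u" if "u \<in> set P" "x < u" for u
  proof -
    have "u \<in> M" using that by (simp add: M_def)
    with \<open>finite M\<close> have "Min M \<le> u" by (rule Min_le)
    then show ?thesis by (simp add: y_def)
  qed
  have "ereal (polygon_length g P) \<le> ereal (dist (g x) (g y)) + curve_variation g y b"
    using P(1) \<open>x < y\<close> \<open>y \<le> b\<close> gap by (rule polygon_length_le_chord_plus_curve_variation)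
  moreover have "dist (g x) (g y) < e/2"
    using d[of y] \<open>x < y\<close> \<open>d > 0\<close> by (auto simp: y_def dist_real_def dist_commute)
  moreover have add: "curve_variation g x b = curve_variation g x y + curve_variation g y b"
    using \<open>x < y\<close> \<open>y \<le> b\<close> by (intro curve_variation_add) auto
  then obtain A B where A: "curve_variation g x y = ereal A" and B: "curve_variation g y b = ereal B"
    using v curve_variation_nonneg[of x y g] curve_variation_nonneg[of y b g] \<open>x < y\<close> \<open>y \<le> b\<close>
    by (cases "curve_variation g x y"; cases "curve_variation g y b") auto
  ultimately have "A < e" using add v P(2) by simp
  with \<open>x < y\<close> \<open>y \<le> b\<close> A show thesis by (intro that) auto
qed

lemma curve_variation_left_small:
  assumes "isCont g x" and "a < x" and "curve_variation g a x < \<infinity>" and "0 < e"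
  obtains y where "a \<le> y" "y < x" "curve_variation g y x < ereal e"
proof -
  let ?h = "\<lambda>t. g (- t)"
  have reflect: "curve_variation ?h c d = curve_variation g (- d) (- c)" for c d
    using curve_variation_reflect[of g 0 c d] by simp
  have "isCont ?h (- x)" using isCont_o2[where f=uminus and a="- x" and g=g] assms(1) by simp
  moreover have "- x < - a" "curve_variation ?h (- x) (- a) < \<infinity>"
    using assms(2,3) by (simp_all add: reflect)
  ultimately obtain y where "- x < y" "y \<le> - a" "curve_variation ?h (- x) y < ereal e"
    using \<open>0 < e\<close> by (rule curve_variation_right_small)
  then show thesis
    by (intro that[of "- y"]) (simp_all add: reflect)
qed

definition arclength :: "(real \<Rightarrow> real^3) \<Rightarrow> real \<Rightarrow> real" where
  "arclength g t = real_of_ereal (curve_variation g 0 t)"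

lemma arclength_0 [simp]: "arclength g 0 = 0"
  by (simp add: arclength_def curve_variation_refl)

lemma curve_variation_mono_interval:
  assumes "a \<le> c" "c \<le> d" "d \<le> b"
  shows "curve_variation g c d \<le> curve_variation g a b"
proof -
  have "curve_variation g c d \<le> curve_variation g c d + curve_variation g d b"
    using curve_variation_nonneg[OF assms(3)] by (rule add_increasing2) simp
  also have "\<dots> \<le> curve_variation g a c + (curve_variation g c d + curve_variation g d b)"
    using curve_variation_nonneg[OF assms(1)] by (rule add_increasing) simp
  also have "\<dots> = curve_variation g a b"
    using curve_variation_add[of a c b g] curve_variation_add[of c d b g] assms by simp
  finally show ?thesis .
qed

lemma curve_variation_eq_arclength_diff:
  assumes fin: "curve_variation g 0 l < \<infinity>" and "0 \<le> a" "a \<le> b" "b \<le> l"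
  shows "curve_variation g a b = ereal (arclength g b - arclength g a)"
proof -
  have finite: "\<bar>curve_variation g c d\<bar> \<noteq> \<infinity>" if "0 \<le> c" "c \<le> d" "d \<le> l" for c d
    using curve_variation_mono_interval[OF that, of g] curve_variation_nonneg[OF that(2), of g] fin
    by auto
  have "curve_variation g 0 b = curve_variation g 0 a + curve_variation g a b"
    using assms by (intro curve_variation_add) auto
  with assms finite[of 0 a] finite[of a b] finite[of 0 b] show ?thesis
    unfolding arclength_def by (cases "curve_variation g 0 a"; cases "curve_variation g a b") auto
qed

lemma arclength_mono:
  assumes "curve_variation g 0 l < \<infinity>" "0 \<le> a" "a \<le> b" "b \<le> l"
  shows "arclength g a \<le> arclength g b"
  using curve_variation_eq_arclength_diff[OF assms] curve_variation_nonneg[OF assms(3), of g]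
  by simp

lemma dist_le_arclength_diff:
  assumes "curve_variation g 0 l < \<infinity>" "0 \<le> a" "a \<le> b" "b \<le> l"
  shows "dist (g a) (g b) \<le> arclength g b - arclength g a"
  using curve_variation_eq_arclength_diff[OF assms] dist_le_curve_variation[OF assms(3), of g]
  by simp

lemma arclength_right_small:
  assumes cont: "continuous_on UNIV g" and fin: "curve_variation g 0 l < \<infinity>"
    and t: "t \<in> {0..l}" and "0 < e"
  obtains d where "0 < d"
    "\<And>t'. t \<le> t' \<Longrightarrow> t' \<le> l \<Longrightarrow> t' < t + d \<Longrightarrow> arclength g t' - arclength g t < e"
proof (cases "t < l")
  case True
  moreover have "isCont g t" using cont by (simp add: continuous_on_eq_continuous_at)
  moreover have "curve_variation g t l < \<infinity>"
    using t curve_variation_eq_arclength_diff[OF fin, of t l] by simp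
  ultimately obtain y where y: "t < y" "y \<le> l" "curve_variation g t y < ereal e"
    using curve_variation_right_small \<open>0 < e\<close> by blast
  with t curve_variation_eq_arclength_diff[OF fin, of t y] have "arclength g y - arclength g t < e"
    by simp
  moreover have "arclength g t' \<le> arclength g y" if "t \<le> t'" "t' < y" for t'
    using arclength_mono[OF fin, of t' y] that t y by auto
  ultimately show thesis using y by (intro that[of "y - t"]) fastforce+
qed (use t \<open>0 < e\<close> in \<open>auto intro: that[of 1]\<close>)

lemma arclength_left_small:
  assumes cont: "continuous_on UNIV g" and fin: "curve_variation g 0 l < \<infinity>"
    and t: "t \<in> {0..l}" and "0 < e"
  obtains d where "0 < d"
    "\<And>t'. 0 \<le> t' \<Longrightarrow> t' \<le> t \<Longrightarrow> t - d < t' \<Longrightarrow> arclength g t - arclength g t' < e"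
proof (cases "0 < t")
  case True
  moreover have "isCont g t" using cont by (simp add: continuous_on_eq_continuous_at)
  moreover have "curve_variation g 0 t < \<infinity>"
    using t curve_variation_eq_arclength_diff[OF fin, of 0 t] by simp
  ultimately obtain y where y: "0 \<le> y" "y < t" "curve_variation g y t < ereal e"
    using curve_variation_left_small \<open>0 < e\<close> by blast
  with t curve_variation_eq_arclength_diff[OF fin, of y t] have "arclength g t - arclength g y < e"
    by simp
  moreover have "arclength g y \<le> arclength g t'" if "y < t'" "t' \<le> t" for t'
    using arclength_mono[OF fin, of y t'] that t y by auto
  ultimately show thesis using y by (intro that[of "t - y"]) fastforce+
qed (use t \<open>0 < e\<close> in \<open>auto intro: that[of 1]\<close>)

lemma continuous_on_arclength:
  assumes cont: "continuous_on UNIV g" and fin: "curve_variation g 0 l < \<infinity>"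
  shows "continuous_on {0..l} (arclength g)"
  unfolding continuous_on_iff
proof (intro ballI allI impI)
  fix t e :: real assume t: "t \<in> {0..l}" and "0 < e"
  obtain d1 where "0 < d1"
    and d1: "\<And>t'. t \<le> t' \<Longrightarrow> t' \<le> l \<Longrightarrow> t' < t + d1 \<Longrightarrow> arclength g t' - arclength g t < e"
    using arclength_right_small[OF cont fin t \<open>0 < e\<close>] by blast
  obtain d2 where "0 < d2"
    and d2: "\<And>t'. 0 \<le> t' \<Longrightarrow> t' \<le> t \<Longrightarrow> t - d2 < t' \<Longrightarrow> arclength g t - arclength g t' < e"
    using arclength_left_small[OF cont fin t \<open>0 < e\<close>] by blast
  show "\<exists>d>0. \<forall>t'\<in>{0..l}. dist t' t < d \<longrightarrow> dist (arclength g t') (arclength g t) < e"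
  proof (intro exI[of _ "min d1 d2"] conjI ballI impI)
    fix t' assume "t' \<in> {0..l}" "dist t' t < min d1 d2"
    with t d1[of t'] d2[of t'] arclength_mono[OF fin, of t t'] arclength_mono[OF fin, of t' t]
    show "dist (arclength g t') (arclength g t) < e"
      by (cases "t \<le> t'") (auto simp: dist_real_def)
  qed (use \<open>0 < d1\<close> \<open>0 < d2\<close> in simp)
qed

lemma arclength_surj:
  assumes "continuous_on UNIV g" "curve_variation g 0 l < \<infinity>" "0 \<le> l"
    and "0 \<le> s" "s \<le> arclength g l"
  obtains t where "0 \<le> t" "t \<le> l" "arclength g t = s"
  using IVT'[of "arclength g" 0 s l] continuous_on_arclength[OF assms(1,2)] assms(3-5)
  by (auto intro: that)

lemma arclength_shift:
  assumes fin: "curve_variation g 0 l < \<infinity>"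
    and shift: "\<And>t. g (t + c) = f (g t)" and iso: "\<And>x y. dist (f x) (f y) = dist x y"
    and "0 \<le> c" "0 \<le> t" "t + c \<le> l"
  shows "arclength g (t + c) = arclength g c + arclength g t"
proof -
  have "curve_variation g (0 + c) (t + c) = curve_variation (\<lambda>s. f (g s)) 0 t"
    by (simp only: curve_variation_shift[symmetric] shift)
  also have "\<dots> = curve_variation g 0 t"
    using iso by (rule curve_variation_isometry)
  finally show ?thesis
    using curve_variation_eq_arclength_diff[OF fin, of c "t + c"]
      curve_variation_eq_arclength_diff[OF fin, of 0 t] assms(4-6) by simp
qed

lemma arclength_reflect:
  assumes fin: "curve_variation g 0 l < \<infinity>"
    and reflect: "\<And>t. g (c - t) = f (g t)" and iso: "\<And>x y. dist (f x) (f y) = dist x y"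
    and "0 \<le> t" "t \<le> c" "c \<le> l"
  shows "arclength g (c - t) = arclength g c - arclength g t"
proof -
  have "curve_variation g (c - t) (c - 0) = curve_variation (\<lambda>s. f (g s)) 0 t"
    by (simp only: curve_variation_reflect[symmetric] reflect)
  also have "\<dots> = curve_variation g 0 t"
    using iso by (rule curve_variation_isometry)
  finally show ?thesis
    using curve_variation_eq_arclength_diff[OF fin, of "c - t" c]
      curve_variation_eq_arclength_diff[OF fin, of 0 t] assms(4-6) by simp
qed

lemma lipschitz_arclength_param:
  assumes cont: "continuous_on UNIV g" and fin: "curve_variation g 0 l < \<infinity>" and "0 \<le> l"
    and param: "\<And>t. t \<in> {0..l} \<Longrightarrow> G (arclength g t) = g t"
  shows "1-lipschitz_on {0..arclength g l} G"
proof (rule lipschitz_onI)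
  fix u v assume "u \<in> {0..arclength g l}" "v \<in> {0..arclength g l}"
  then obtain t1 t2 where t1: "t1 \<in> {0..l}" "arclength g t1 = u"
    and t2: "t2 \<in> {0..l}" "arclength g t2 = v"
    using arclength_surj[OF cont fin \<open>0 \<le> l\<close>] by (metis atLeastAtMost_iff)
  have "dist (g t1) (g t2) \<le> \<bar>arclength g t1 - arclength g t2\<bar>"
    using dist_le_arclength_diff[OF fin, of t1 t2] dist_le_arclength_diff[OF fin, of t2 t1] t1 t2
    by (cases "t1 \<le> t2") (auto simp: dist_commute)
  with t1 t2 param show "dist (G u) (G v) \<le> 1 * dist u v"
    by (auto simp: dist_real_def)
qed simp

lemma curve_variation_arclength_param:
  assumes cont: "continuous_on UNIV g" and fin: "curve_variation g 0 l < \<infinity>" and "0 \<le> l"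
    and param: "\<And>t. t \<in> {0..l} \<Longrightarrow> G (arclength g t) = g t"
  shows "curve_variation G 0 (arclength g l) = curve_variation g 0 l"
proof (rule antisym)
  show "curve_variation G 0 (arclength g l) \<le> curve_variation g 0 l"
    using curve_variation_le_lipschitz[OF lipschitz_arclength_param[OF assms]]
      curve_variation_eq_arclength_diff[OF fin, of 0 l] \<open>0 \<le> l\<close> by simp
next
  show "curve_variation g 0 l \<le> curve_variation G 0 (arclength g l)"
    unfolding curve_variation_eq_SUP[of g]
  proof (rule SUP_least)
    fix P assume P: "P \<in> partitions 0 l"
    then have P_bounds: "\<And>t. t \<in> set P \<Longrightarrow> t \<in> {0..l}" using partitions_bounds by auto
    have "sorted (map (arclength g) P)"
      using P P_bounds arclength_mono[OF fin] unfolding partitions_def sorted_wrt_map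
      by (auto elim!: sorted_wrt_mono_rel[rotated])
    with P have "map (arclength g) P \<in> partitions 0 (arclength g l)"
      by (auto simp: partitions_def hd_map last_map)
    moreover have "polygon_length g P = polygon_length G (map (arclength g) P)"
      unfolding polygon_length_map by (rule polygon_length_cong) (metis P_bounds param comp_apply)
    ultimately show "ereal (polygon_length g P) \<le> curve_variation G 0 (arclength g l)"
      by (simp add: polygon_length_le_curve_variation)
  qed
qed

lemma periodic_on_R_plus_of_int:
  assumes "periodic_on_R L f"
  shows "f (x + of_int k * L) = f x"
proof -
  interpret periodic_fun_simple f L
    using assms by unfold_locales (simp add: periodic_on_R_def)
  show ?thesis by (rule plus_of_int)
qed

lemma remainder_floor_divide_mult:
  assumes "0 < L"
  shows "x - of_int \<lfloor>x / L\<rfloor> * L \<in> {0..<L}"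
proof -
  have "x - of_int \<lfloor>x / L\<rfloor> * L = frac (x / L) * L" using assms by (simp add: frac_def algebra_simps)
  with assms show ?thesis by (simp add: frac_lt_1)
qed

lemma periodic_on_R_eqI:
  assumes "periodic_on_R L f" "periodic_on_R L h" "0 < L" and "\<And>s. s \<in> {0..L} \<Longrightarrow> f s = h s"
  shows "f = h"
proof
  fix x
  define k where "k = \<lfloor>x / L\<rfloor>"
  have "x - of_int k * L \<in> {0..L}"
    using remainder_floor_divide_mult[OF \<open>0 < L\<close>, of x] by (simp add: k_def)
  then show "f x = h x"
    using assms(4) periodic_on_R_plus_of_int[OF assms(1), of "x - of_int k * L" k]
      periodic_on_R_plus_of_int[OF assms(2), of "x - of_int k * L" k] by simp
qed

lemma continuous_on_periodic:
  assumes per: "periodic_on_R L G" and "0 < L" and cont: "continuous_on {0..L} G"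
  shows "continuous_on UNIV G"
proof -
  have "continuous_on {-L..0} (\<lambda>x. G (x + L))"
    by (rule continuous_on_compose2[OF cont continuous_on_add[OF continuous_on_id continuous_on_const]])
      auto
  moreover have "G (x + L) = G x" for x using per by (simp add: periodic_on_R_def)
  ultimately have "continuous_on ({-L..0} \<union> {0..L}) G"
    using cont by (intro continuous_on_closed_Un) simp_all
  moreover have "{-L..0} \<union> {0..L} = {-L..L}" using \<open>0 < L\<close> by auto
  ultimately have "continuous_on {-L<..<L} G"
    by (metis continuous_on_subset greaterThanLessThan_subseteq_atLeastAtMost_iff order_refl)
  then have isCont_period: "isCont G x0" if "x0 \<in> {0..<L}" for x0
    using that \<open>0 < L\<close> by (simp add: continuous_on_eq_continuous_at)
  have "isCont G x" for x
  proof -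
    define k where "k = \<lfloor>x / L\<rfloor>"
    have "isCont G (x - of_int k * L)"
      using isCont_period remainder_floor_divide_mult[OF \<open>0 < L\<close>] by (simp add: k_def)
    then have "isCont (\<lambda>y. G (y - of_int k * L)) x"
      using isCont_o2[where f="\<lambda>y. y - of_int k * L" and a=x and g=G] by simp
    moreover have "G (y - of_int k * L) = G y" for y
      using periodic_on_R_plus_of_int[OF per, of "y - of_int k * L" k] by simp
    ultimately show ?thesis by simp
  qed
  then show ?thesis by (simp add: continuous_on_eq_continuous_at)
qed

lemma diag3_mult_vec_nth:
  "(diag3 a b c *v x) $ k = (if k = 1 then a else if k = 2 then b else c) * x $ k"
proof -
  have "k = 1 \<or> k = 2 \<or> k = 3" by (rule exhaust_3)
  then show ?thesis unfolding diag3_def matrix_vector_mult_def sum_3 by auto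
qed

lemma dist_diag3_mult_vec:
  assumes "\<bar>a\<bar> = 1" "\<bar>b\<bar> = 1" "\<bar>c\<bar> = 1"
  shows "dist (diag3 a b c *v x) (diag3 a b c *v y) = dist x y"
  unfolding dist_vec_def diag3_mult_vec_nth dist_real_def
  by (rule L2_set_cong) (use assms in \<open>auto simp flip: right_diff_distrib simp: abs_mult\<close>)

lemma Rmat_eq_diag3: "\<exists>a b c. \<bar>a\<bar> = 1 \<and> \<bar>b\<bar> = 1 \<and> \<bar>c\<bar> = 1 \<and> Rmat i = diag3 a b c"
proof -
  have "mat 1 = diag3 1 1 1"
    by (simp add: vec_eq_iff mat_def diag3_def)
  then show ?thesis unfolding Rmat_def by force
qed

lemma dist_Rmat_mult_vec: "dist (Rmat i *v x) (Rmat i *v y) = dist x y"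
  using Rmat_eq_diag3[of i] dist_diag3_mult_vec by metis

lemma Rmat_2_Rmat_3: "Rmat 2 *v (Rmat 3 *v x) = Rmat 1 *v x"
  by (simp add: Rmat_def vec_eq_iff diag3_mult_vec_nth)

lemma tau_0: "tau l 0 G = G"
  by (simp add: tau_def Rmat_def psi_def)

lemma tau_1_eq_tau_2_tau_3:
  assumes "periodic_on_R l G"
  shows "tau l 1 G = tau l 2 (tau l 3 G)"
proof
  fix t
  have "3 * l / 2 - t = (l / 2 - t) + l" by simp
  then have "G (3 * l / 2 - t) = G (l / 2 - t)" using assms unfolding periodic_on_R_def by metis
  then show "tau l 1 G t = tau l 2 (tau l 3 G) t"
    by (simp add: tau_def psi_def Rmat_2_Rmat_3 algebra_simps)
qed

lemma periodic_on_R_tau: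
  assumes "periodic_on_R L G"
  shows "periodic_on_R L (tau L i G)"
  unfolding periodic_on_R_def
proof
  fix s
  have plus: "G (x + L) = G x" for x using assms by (simp add: periodic_on_R_def)
  have minus: "G (x - L) = G x" for x using plus[of "x - L"] by simp
  have "psi L i (s + L) = psi L i s + L \<or> psi L i (s + L) = psi L i s - L"
    by (simp add: psi_def)
  then show "tau L i G (s + L) = tau L i G s"
    unfolding tau_def using plus minus by auto
qed

lemma tau_arclength_param:
  assumes cont: "continuous_on UNIV g" and fin: "curve_variation g 0 l < \<infinity>" and "0 \<le> l"
    and param: "\<And>t. t \<in> {0..l} \<Longrightarrow> G (arclength g t) = g t"
    and Gper: "periodic_on_R (arclength g l) G" and "0 < arclength g l"
    and sym: "tau l i g = g"
    and compat: "\<And>t. t \<in> {0..l} \<Longrightarrow> G (psi (arclength g l) i (arclength g t)) = g (psi l i t)"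
  shows "tau (arclength g l) i G = G"
proof (rule periodic_on_R_eqI[OF periodic_on_R_tau[OF Gper] Gper \<open>0 < arclength g l\<close>])
  fix s assume "s \<in> {0..arclength g l}"
  then obtain t where t: "t \<in> {0..l}" "arclength g t = s"
    using arclength_surj[OF cont fin \<open>0 \<le> l\<close>] by (metis atLeastAtMost_iff)
  have "tau (arclength g l) i G s = tau l i g t"
    using compat[OF t(1)] unfolding t(2) by (simp add: tau_def)
  also have "\<dots> = G s"
    using sym param[OF t(1)] unfolding t(2) by simp
  finally show "tau (arclength g l) i G s = G s" .
qed

lemma arclength_param_psi_3:
  assumes fin: "curve_variation g 0 l < \<infinity>"
    and param: "\<And>t. t \<in> {0..l} \<Longrightarrow> G (arclength g t) = g t"
    and sym: "tau l 3 g = g" and t: "t \<in> {0..l}"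
  shows "G (psi (arclength g l) 3 (arclength g t)) = g (psi l 3 t)"
proof -
  have "g (l - s) = Rmat 3 *v g s" for s
    using fun_cong[OF sym, of "l - s"] by (simp add: tau_def psi_def)
  then have "arclength g (l - t) = arclength g l - arclength g t"
    using arclength_reflect[OF fin _ dist_Rmat_mult_vec] t by auto
  then show ?thesis using param[of "l - t"] t by (simp add: psi_def)
qed

lemma arclength_param_psi_2:
  assumes fin: "curve_variation g 0 l < \<infinity>"
    and gper: "periodic_on_R l g" and Gper: "periodic_on_R (arclength g l) G"
    and param: "\<And>t. t \<in> {0..l} \<Longrightarrow> G (arclength g t) = g t"
    and sym: "tau l 2 g = g" and t: "t \<in> {0..l}"
  shows "G (psi (arclength g l) 2 (arclength g t)) = g (psi l 2 t)"
proof -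
  let ?S = "arclength g" and ?L = "arclength g l"
  have "g (s + l / 2) = Rmat 2 *v g s" for s
    using fun_cong[OF sym, of "s + l / 2"] by (simp add: tau_def psi_def)
  then have shift: "?S (s + l / 2) = ?S (l / 2) + ?S s" if "0 \<le> s" "s + l / 2 \<le> l" for s
    using arclength_shift[OF fin _ dist_Rmat_mult_vec] that t by auto
  have half: "?S (l / 2) = ?L / 2"
    using shift[of "l / 2"] t by auto
  show ?thesis
  proof (cases "l / 2 \<le> t")
    case True
    then have "?S t - ?L / 2 = ?S (t - l / 2)" using shift[of "t - l / 2"] half t by auto
    then show ?thesis using param[of "t - l / 2"] True t by (simp add: psi_def)
  next
    case False
    then have "?S t - ?L / 2 = ?S (t + l / 2) - ?L" using shift[of t] half t by auto
    then have "G (?S t - ?L / 2) = G (?S (t + l / 2))"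
      using Gper unfolding periodic_on_R_def by (metis diff_add_cancel)
    also have "\<dots> = g (t + l / 2)" using param[of "t + l / 2"] False t by simp
    also have "\<dots> = g (t - l / 2)"
      using gper unfolding periodic_on_R_def by (metis add_diff_eq diff_add_cancel field_sum_of_halves)
    finally show ?thesis by (simp add: psi_def)
  qed
qed

theorem lemma3p12:
  fixes l :: real and g G :: "real \<Rightarrow> real^3"
  assumes "l > 0" and "g \<in> Sigma_sym l"
    and "is_arclength_param l g G"
  shows "G \<in> Sigma_sym (real_of_ereal (curve_length l g))"
proof -
  have cont: "continuous_on UNIV g" and gper: "periodic_on_R l g"
    and pos: "0 < curve_length l g" and finite_length: "curve_length l g < \<infinity>"
    and sym: "\<And>i. i \<in> {0, 1, 2, 3} \<Longrightarrow> tau l i g = g"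
    using assms(2) by (auto simp: Sigma_sym_def)
  have fin: "curve_variation g 0 l < \<infinity>" using finite_length by (simp add: curve_length_def)
  have L: "real_of_ereal (curve_length l g) = arclength g l"
    by (simp add: curve_length_def arclength_def)
  have param: "\<And>t. t \<in> {0..l} \<Longrightarrow> G (arclength g t) = g t"
    and Gper: "periodic_on_R (arclength g l) G"
    using assms(3) unfolding is_arclength_param_def L by (auto simp flip: arclength_def)
  have "0 < arclength g l"
    using pos finite_length L by (cases "curve_length l g") auto
  have "curve_length (arclength g l) G = curve_length l g"
    using curve_variation_arclength_param[OF cont fin _ param] assms(1) by (simp add: curve_length_def)
  moreover have "continuous_on UNIV G"
    using continuous_on_periodic[OF Gper \<open>0 < arclength g l\<close>] lipschitz_on_continuous_on
      lipschitz_arclength_param[OF cont fin _ param] assms(1) by auto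
  moreover have "tau (arclength g l) i G = G" if "i \<in> {2, 3}" for i
    using that tau_arclength_param[OF cont fin _ param Gper \<open>0 < arclength g l\<close> sym]
      arclength_param_psi_2[OF fin gper Gper param sym] arclength_param_psi_3[OF fin param sym]
      assms(1) by auto
  then have "tau (arclength g l) i G = G" if "i \<in> {0, 1, 2, 3}" for i
    using that tau_0 tau_1_eq_tau_2_tau_3[OF Gper] by auto
  ultimately show ?thesis
    unfolding L Sigma_sym_def using Gper pos finite_length by auto
qed

end
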